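(* Let $n\ge0$, $d\ge 1$, $l>0$, and $m = 2^{n+1}-1+2l$. For integers $m'=2^{n+1}-\epsilon+2l'$ with $\epsilon\in\{0,1\}$, $l'\ge0$, set $$k^G_n(d,m') = \sum_{i\ge0}\binom{2^{n+1}-\epsilon}{d-2i}\binom{l'}{i},\qquad \bar k^C_n(d,m') = \sum_{i\ge0}\binom{2^{n+1}-1-\epsilon}{d-1-2i}\binom{l'}{i}.$$ Then $$\frac12\left[k^G_n(d,m-1)+\bar k^C_n(d,m)-k^G_n(d,m)\right] = \sum_{i\ge0}\binom{2^{n+1}-2}{d-1-2i}\binom{l-1}{i}.$$
   Context: Binomial coefficients $\binom{a}{b}$ are $0$ when $b<0$ or $b>a$. Note $m-1 = 2^{n+1}+2(l-1)$, so $k^G_n(d,m-1)$ uses $\epsilon=0$, $l'=l-1$, while $k^G_n(d,m)$ and $\bar k^C_n(d,m)$ use $\epsilon=1$, $l'=l$. *)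

theory Defs
  imports Complex_Main
begin

definition binom :: "int \<Rightarrow> int \<Rightarrow> int" where
  "binom a b = (if b < 0 \<or> b > a then 0 else int (nat a choose nat b))"

text \<open>For m' = 2^(n+1) - eps + 2 l': eps is determined by the parity of m', and l' by m'.\<close>
definition epsm :: "int \<Rightarrow> int" where
  "epsm m' = (if odd m' then 1 else 0)"

definition lprime :: "nat \<Rightarrow> int \<Rightarrow> int" where
  "lprime n m' = (m' - 2 ^ (n + 1) + epsm m') div 2"

text \<open>Sums over i >= 0; all terms with i > d vanish, so the range {0..d} suffices.\<close>
definition kG :: "nat \<Rightarrow> int \<Rightarrow> int \<Rightarrow> int" where
  "kG n d m' = (\<Sum>i\<in>{0..d}. binom (2 ^ (n + 1) - epsm m') (d - 2 * i) * binom (lprime n m') i)"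

definition kCbar :: "nat \<Rightarrow> int \<Rightarrow> int \<Rightarrow> int" where
  "kCbar n d m' = (\<Sum>i\<in>{0..d}. binom (2 ^ (n + 1) - 1 - epsm m') (d - 1 - 2 * i) * binom (lprime n m') i)"

end

theory Submission
  imports Defs
begin

text \<open>All three quantities are coefficients of \<open>x\<^sup>e\<close> in \<open>(1 + x)\<^sup>a (1 + x\<^sup>2)\<^sup>L\<close>.
  Pascal's rule in \<open>L\<close> (multiplying by \<open>1 + x\<^sup>2\<close>) and in \<open>a\<close> (multiplying by \<open>1 + x\<close>)
  rewrites each of them in terms of the four coefficients belonging to \<open>a = 2\<^bsup>n+1\<^esup> - 2\<close>
  and \<open>L = l - 1\<close>; in the combination of the theorem everything cancels except twice
  the coefficient of \<open>x\<^bsup>d-1\<^esup>\<close>.\<close>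

definition binom_conv :: "int \<Rightarrow> int \<Rightarrow> int \<Rightarrow> int \<Rightarrow> int" where
  "binom_conv d a e L = (\<Sum>i\<in>{0..d}. binom a (e - 2 * i) * binom L i)"

lemma binom_pascal:
  assumes "a \<ge> 1"
  shows "binom a b = binom (a - 1) b + binom (a - 1) (b - 1)"
proof -
  consider "b < 0" | "b = 0" | "b > a" | "b = a" | "0 < b \<and> b < a" by linarith
  then show ?thesis
  proof cases
    case 5
    define p where "p = nat a - 1"
    define q where "q = nat b - 1"
    have p: "nat a = Suc p" and q: "nat b = Suc q" using 5 unfolding p_def q_def by auto
    have "nat (a - 1) = p" "nat (b - 1) = q" using p q by auto
    then show ?thesis using 5 p q unfolding binom_def by simp
  qed (use assms in \<open>auto simp: binom_def\<close>)
qed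

lemma sum_shift_index:
  fixes F G :: "int \<Rightarrow> int"
  assumes "F (d + 1) = 0" "G (-1) = 0" "d \<ge> 0"
  shows "(\<Sum>i\<in>{0..d}. F i * G (i - 1)) = (\<Sum>i\<in>{0..d}. F (i + 1) * G i)"
proof -
  obtain k where k: "d = int k" using assms(3) by (metis nonneg_eq_int)
  have "(\<Sum>i\<in>{0..int k}. F i * G (i - 1))
      = (\<Sum>i\<in>{0..int k}. F (i + 1) * G i) - F (int k + 1) * G (int k)"
  proof (induction k)
    case 0
    then show ?case using assms(2) by simp
  next
    case (Suc k)
    have "{0..int (Suc k)} = insert (int k + 1) {0..int k}" by auto
    then show ?case using Suc by (simp add: algebra_simps)
  qed
  then show ?thesis using assms(1) k by simp
qed

lemma binom_conv_pascal_lower: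
  assumes "a \<ge> 1"
  shows "binom_conv d a e L = binom_conv d (a - 1) e L + binom_conv d (a - 1) (e - 1) L"
  unfolding binom_conv_def binom_pascal[OF assms]
  by (simp add: algebra_simps sum.distrib)

lemma binom_conv_pascal_upper:
  assumes "L \<ge> 1" "0 \<le> d" "e < 2 * d + 2"
  shows "binom_conv d a e L = binom_conv d a e (L - 1) + binom_conv d a (e - 2) (L - 1)"
proof -
  have "binom_conv d a e L = binom_conv d a e (L - 1)
      + (\<Sum>i\<in>{0..d}. binom a (e - 2 * i) * binom (L - 1) (i - 1))"
    unfolding binom_conv_def binom_pascal[OF assms(1)]
    by (simp add: algebra_simps sum.distrib)
  also have "(\<Sum>i\<in>{0..d}. binom a (e - 2 * i) * binom (L - 1) (i - 1))
      = (\<Sum>i\<in>{0..d}. binom a (e - 2 * (i + 1)) * binom (L - 1) i)"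
    by (rule sum_shift_index) (use assms in \<open>auto simp: binom_def\<close>)
  also have "\<dots> = binom_conv d a (e - 2) (L - 1)"
    unfolding binom_conv_def by (simp add: algebra_simps)
  finally show ?thesis .
qed

lemma kG_odd: "kG n d (2 ^ (n + 1) - 1 + 2 * l) = binom_conv d (2 ^ (n + 1) - 1) d l"
  by (simp add: kG_def binom_conv_def epsm_def lprime_def)

lemma kG_even: "kG n d (2 ^ (n + 1) + 2 * l) = binom_conv d (2 ^ (n + 1)) d l"
  by (simp add: kG_def binom_conv_def epsm_def lprime_def)

lemma kCbar_odd: "kCbar n d (2 ^ (n + 1) - 1 + 2 * l) = binom_conv d (2 ^ (n + 1) - 2) (d - 1) l"
  by (simp add: kCbar_def binom_conv_def epsm_def lprime_def)

theorem lemma6p5: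
  fixes n :: nat and d l m :: int
  assumes "d \<ge> 1" and "l > 0" and "m = 2 ^ (n + 1) - 1 + 2 * l"
  shows "(real_of_int (kG n d (m - 1)) + real_of_int (kCbar n d m) - real_of_int (kG n d m)) / 2
         = real_of_int (\<Sum>i\<in>{0..d}. binom (2 ^ (n + 1) - 2) (d - 1 - 2 * i) * binom (l - 1) i)"
proof -
  define N :: int where "N = 2 ^ (n + 1)"
  have "N \<ge> 2" using power_increasing[of 1 "n + 1" "2::int"] by (simp add: N_def)
  let ?S = "\<lambda>e. binom_conv d (N - 2) e (l - 1)"
  have "m - 1 = N + 2 * (l - 1)" using assms(3) by (simp add: N_def)
  then have "kG n d (m - 1) = binom_conv d N d (l - 1)"
    unfolding N_def by (simp only: kG_even)
  also have "\<dots> = ?S d + 2 * ?S (d - 1) + ?S (d - 2)"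
    using binom_conv_pascal_lower[of N] binom_conv_pascal_lower[of "N - 1"] \<open>N \<ge> 2\<close>
    by simp
  finally have kG_prev: "kG n d (m - 1) = ?S d + 2 * ?S (d - 1) + ?S (d - 2)" .
  have "kG n d m = binom_conv d (N - 1) d l"
    unfolding assms(3) N_def by (rule kG_odd)
  also have "\<dots> = binom_conv d (N - 1) d (l - 1) + binom_conv d (N - 1) (d - 2) (l - 1)"
    using binom_conv_pascal_upper[of l d d] assms by simp
  also have "\<dots> = ?S d + ?S (d - 1) + ?S (d - 2) + ?S (d - 3)"
    using binom_conv_pascal_lower[of "N - 1"] \<open>N \<ge> 2\<close> by simp
  finally have kG_m: "kG n d m = ?S d + ?S (d - 1) + ?S (d - 2) + ?S (d - 3)" .
  have kCbar_m: "kCbar n d m = ?S (d - 1) + ?S (d - 3)"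
    using kCbar_odd[of n d l] binom_conv_pascal_upper[of l d "d - 1"] assms
    by (simp add: N_def)
  have "kG n d (m - 1) + kCbar n d m - kG n d m = 2 * ?S (d - 1)"
    unfolding kG_prev kG_m kCbar_m by simp
  then show ?thesis
    unfolding N_def binom_conv_def by (simp flip: of_int_add of_int_diff)
qed

end
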